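(* Let $N$ be an odd positive integer and $G$ a group as described in the context. For all $\chi_1,\chi_2\in G$ and $m,n\in\mathbb{Z}$, on the Fock space, $$[L_m^{\chi_1},L_n^{\chi_2}]=(m-n)L_{m+n}^{\chi_1\chi_2}+\delta_{m,-n}\Big[\frac mN L(-1,\chi_1\chi_2)+\frac{m^3}{12}\sum_{k=1}^N(\chi_1\chi_2)(k)\Big].$$ Equivalently, with $L'^{\chi}_0:=L_0^{\chi}+\frac1{2N}L(-1,\chi)$, one has $[L_m^{\chi_1},L_{-m}^{\chi_2}]=2m\,L'^{\chi_1\chi_2}_0+\frac{m^3}{12}\sum_{k=1}^N(\chi_1\chi_2)(k)$.
   Context: $G$ is a finite abelian group, under pointwise multiplication, of functions $\mathbb{Z}/N\mathbb{Z}\to\mathbb{C}$ (its identity element $e$ need not be the constant function $1$), such that every $\chi\in G$ satisfies $\chi(j)=\chi(-j)$ for all $j$, and every $\chi\in G$ other than $e$ satisfies $\sum_{k=1}^N\chi(k)=0$. Oscillator algebra: generators $a_j$ ($j\in\mathbb{Z}$), central $1$, $[a_m,a_n]=m\delta_{m,-n}$, acting on its Fock space (each vector killed by $a_j$ for $j\gg0$). Normal ordering: $:a_ia_j:=a_ia_j$ if $i\le j$, $=a_ja_i$ otherwise. Functions on $\mathbb{Z}/N\mathbb{Z}$ are viewed as $N$-periodic functions on $\mathbb{Z}$. $L_n^{\chi}:=\frac{1}{2N}\sum_{j\in\mathbb{Z}}\chi(j):a_{-j}a_{j+nN}:$. For $N$-periodic $\chi$, $L(-1,\chi):=-\frac{1}{2N}\sum_{k=1}^N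 k^2\chi(k)+\frac12\sum_{k=1}^N k\chi(k)-\frac N{12}\sum_{k=1}^N\chi(k)$. *)

theory Defs
  imports Complex_Main "HOL-Library.Groups_Big_Fun" "HOL-Algebra.Group"
begin

text \<open>Representation of the oscillator algebra on a complex vector space V
 (vector space structure given by scale).  The operator a j is the action of
 the generator a_j; the central element 1 acts as the identity.\<close>

definition oscillator_rep ::
  "(complex \<Rightarrow> 'v::ab_group_add \<Rightarrow> 'v) \<Rightarrow> (int \<Rightarrow> 'v \<Rightarrow> 'v) \<Rightarrow> bool" where
  "oscillator_rep scale a \<longleftrightarrow>
     vector_space scale \<and>
     (\<forall>j. Vector_Spaces.linear scale scale (a j)) \<and>
     (\<forall>m n v. a m (a n v) - a n (a m v) = (if m = - n then scale (of_int m) v else 0))"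

text \<open>Fock-space condition: every vector is killed by a_j for j large.\<close>
definition restricted :: "(int \<Rightarrow> 'v::zero \<Rightarrow> 'v) \<Rightarrow> bool" where
  "restricted a \<longleftrightarrow> (\<forall>v. \<exists>J. \<forall>j\<ge>J. a j v = 0)"

definition normal_ord :: "(int \<Rightarrow> 'v \<Rightarrow> 'v) \<Rightarrow> int \<Rightarrow> int \<Rightarrow> 'v \<Rightarrow> 'v" where
  "normal_ord a i j v = (if i \<le> j then a i (a j v) else a j (a i v))"

text \<open>L_n^chi = 1/(2N) sum_{j in Z} chi(j) :a_{-j} a_{j+nN}: ; on each vector only
 finitely many terms are nonzero, and the sum is the finitely supported sum Sum_any.\<close>
definition Lop ::
  "(complex \<Rightarrow> 'v::ab_group_add \<Rightarrow> 'v) \<Rightarrow> (int \<Rightarrow> 'v \<Rightarrow> 'v) \<Rightarrow> nat \<Rightarrow> (int \<Rightarrow> complex)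
    \<Rightarrow> int \<Rightarrow> 'v \<Rightarrow> 'v" where
  "Lop scale a N chi n v =
     scale (1 / (2 * of_nat N))
       (Sum_any (\<lambda>j::int. scale (chi j) (normal_ord a (- j) (j + n * int N) v)))"

definition Lminus1 :: "nat \<Rightarrow> (int \<Rightarrow> complex) \<Rightarrow> complex" where
  "Lminus1 N chi =
     - (1 / (2 * of_nat N)) * (\<Sum>k=1..int N. of_int (k^2) * chi k)
     + (1/2) * (\<Sum>k=1..int N. of_int k * chi k)
     - (of_nat N / 12) * (\<Sum>k=1..int N. chi k)"

text \<open>The group of functions Z/NZ -> C (as N-periodic functions on Z) under
 pointwise multiplication, with identity e.\<close>
definition fun_group :: "(int \<Rightarrow> complex) set \<Rightarrow> (int \<Rightarrow> complex) \<Rightarrow> (int \<Rightarrow> complex) monoid" where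
  "fun_group G e = \<lparr>carrier = G, mult = (\<lambda>f g x. f x * g x), one = e\<rparr>"

end

theory Submission
  imports Defs
begin

text \<open>
  The contraction terms
  ("anomaly density") vanish unless m + n = 0; then they equal chi(j) j (mN - j) w_m(j) / N,
  where w_m is the signed indicator of the window (0, mN].  The moments
  sum_j chi(j) j^p w_m(j) (p = 1, 2) grow by one period from m to m + 1, which determines them
  as cubic polynomials in m for all integers m and yields the L(-1,chi) and m^3 terms.

  The operator part lives in the locale fock_module: a_x a_y = :a_x a_y: + contraction,
  [L^chi_m, a_k] = -(k/N) chi(k) a_{k+mN} for periodic even chi, hence the commutator of
  L^chi1_m with each quadratic term of L^chi2_n.  Summing over j and shifting j by mN leaves
  (m - n) L^{chi1 chi2}_{m+n} plus the scalar sum of contractions.  The theorem combines the two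
  parts; of the group hypotheses only periodicity and evenness of chi1 and chi2 are needed.
\<close>

subsection \<open>Finitely supported sums over the integers\<close>

lemma finite_support_bounded:
  fixes f :: "int \<Rightarrow> 'b::zero"
  assumes "\<And>j. B < \<bar>j\<bar> \<Longrightarrow> f j = 0"
  shows "finite {j. f j \<noteq> 0}"
  by (rule finite_subset[of _ "{-B..B}"]) (use assms in \<open>auto simp: abs_le_iff not_less[symmetric]\<close>)

lemma finite_support_mono:
  assumes "finite {j. f j \<noteq> 0}" and "\<And>j. f j = 0 \<Longrightarrow> g j = 0"
  shows "finite {j. g j \<noteq> (0::'b::zero)}"
  by (rule finite_subset[OF _ assms(1)]) (use assms(2) in blast)

lemma finite_support_diff:
  fixes f g :: "'a \<Rightarrow> 'b::group_add"
  assumes "finite {j. f j \<noteq> 0}" and "finite {j. g j \<noteq> 0}"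
  shows "finite {j. f j - g j \<noteq> 0}"
  by (rule finite_subset[of _ "{j. f j \<noteq> 0} \<union> {j. g j \<noteq> 0}"]) (use assms in auto)

lemma finite_support_shift:
  fixes f :: "int \<Rightarrow> 'b::zero"
  assumes "finite {j. f j \<noteq> 0}"
  shows "finite {j. f (j + d) \<noteq> 0}"
  using finite_vimageI[OF assms, of "\<lambda>j. j + d"] by (simp add: vimage_def inj_def)

lemma Sum_any_additive:
  assumes "additive F" and "finite {j. g j \<noteq> 0}"
  shows "F (Sum_any g) = Sum_any (\<lambda>j. F (g j))"
proof -
  interpret additive F by fact
  have "Sum_any g = sum g {j. g j \<noteq> 0}"
    using assms(2) by (rule Sum_any.expand_superset) simp
  moreover have "Sum_any (\<lambda>j. F (g j)) = sum (\<lambda>j. F (g j)) {j. g j \<noteq> 0}"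
    using assms(2) by (rule Sum_any.expand_superset) (auto simp: zero)
  ultimately show ?thesis by (simp add: sum)
qed

lemma Sum_any_diff:
  fixes f g :: "'a \<Rightarrow> 'b::ab_group_add"
  assumes "finite {j. f j \<noteq> 0}" and "finite {j. g j \<noteq> 0}"
  shows "Sum_any (\<lambda>j. f j - g j) = Sum_any f - Sum_any g"
proof -
  let ?A = "{j. f j \<noteq> 0} \<union> {j. g j \<noteq> 0}"
  have "finite ?A" using assms by simp
  then show ?thesis
    by (subst (1 2 3) Sum_any.expand_superset[of ?A]) (auto simp: sum_subtractf)
qed

lemma Sum_any_shift:
  fixes f :: "int \<Rightarrow> 'b::comm_monoid_add"
  shows "Sum_any (\<lambda>j. f (j + d)) = Sum_any f"
  by (rule sym, rule Sum_any.reindex_cong[of "\<lambda>j. j + d"])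
     (auto simp: bij_def inj_def surj_def o_def intro: exI[of _ "_ - d"])

lemma periodic_multiple:
  assumes "\<forall>j. f (j + int N) = f j"
  shows "f (j + k * int N) = f j"
proof (induction k rule: int_induct[where k = 0])
  case (step1 i)
  then show ?case using assms[rule_format, of "j + i * int N"] by (simp add: algebra_simps)
next
  case (step2 i)
  then show ?case using assms[rule_format, of "j + (i - 1) * int N"] by (simp add: algebra_simps)
qed simp

lemma int_eq_by_differences:
  fixes f g :: "int \<Rightarrow> 'a::ab_group_add"
  assumes "f 0 = g 0" and "\<And>m. f (m + 1) - f m = g (m + 1) - g m"
  shows "f m = g m"
proof (induction m rule: int_induct[where k = 0])
  case (step1 i)
  then show ?case using assms(2)[of i] by (simp add: algebra_simps)
next
  case (step2 i)
  then show ?case using assms(2)[of "i - 1"] by (simp add: algebra_simps)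
qed (fact assms(1))

subsection \<open>The central term\<close>

text \<open>The signed indicator of the window (0, mN]: for m < 0 it is minus the indicator
  of (mN, 0].\<close>
definition window :: "nat \<Rightarrow> int \<Rightarrow> int \<Rightarrow> complex" where
  "window N m j = of_bool (j \<le> m * int N) - of_bool (j \<le> 0)"

definition moment :: "nat \<Rightarrow> (int \<Rightarrow> complex) \<Rightarrow> nat \<Rightarrow> int \<Rightarrow> complex" where
  "moment N chi p m = Sum_any (\<lambda>j. chi j * of_int j ^ p * window N m j)"

lemma finite_support_window: "finite {j. f j * window N m j \<noteq> 0}"
  by (rule finite_support_bounded[where B = "\<bar>m * int N\<bar>"]) (auto simp: window_def)

lemma window_step:
  "window N (m + 1) j - window N m j = of_bool (j \<in> {m * int N <.. m * int N + int N})"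
  by (simp add: window_def algebra_simps)

lemma moment_step:
  assumes per: "\<forall>j. chi (j + int N) = chi j"
  shows "moment N chi p (m + 1) - moment N chi p m
         = (\<Sum>k=1..int N. chi k * of_int (m * int N + k) ^ p)"
proof -
  let ?I = "{m * int N <.. m * int N + int N}"
  have fin: "finite {j. chi j * of_int j ^ p * window N k j \<noteq> 0}" for k
    by (rule finite_support_window)
  have "moment N chi p (m + 1) - moment N chi p m
        = Sum_any (\<lambda>j. chi j * of_int j ^ p * (window N (m + 1) j - window N m j))"
    unfolding moment_def Sum_any_diff[OF fin fin, symmetric] by (simp add: right_diff_distrib)
  also have "\<dots> = Sum_any (\<lambda>j. if j \<in> ?I then chi j * of_int j ^ p else 0)"
    by (rule Sum_any.cong) (simp add: window_step)
  also have "\<dots> = (\<Sum>j\<in>?I. chi j * of_int j ^ p)"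
    by (simp add: Sum_any.conditionalize)
  also have "?I = (\<lambda>k. k + m * int N) ` {1..int N}"
    by (auto simp: image_iff intro: bexI[of _ "_ - m * int N"])
  also have "(\<Sum>j\<in>\<dots>. chi j * of_int j ^ p) = (\<Sum>k=1..int N. chi k * of_int (m * int N + k) ^ p)"
    by (subst sum.reindex) (auto simp: inj_on_def periodic_multiple[OF per] add.commute)
  finally show ?thesis .
qed

lemma moment_closed_forms:
  fixes chi :: "int \<Rightarrow> complex"
  assumes per: "\<forall>j. chi (j + int N) = chi j"
  defines "S \<equiv> \<Sum>k=1..int N. chi k"
    and "R1 \<equiv> \<Sum>k=1..int N. of_int k * chi k"
    and "R2 \<equiv> \<Sum>k=1..int N. of_int (k^2) * chi k"
  shows "moment N chi 1 m = of_nat N * S * of_int m * (of_int m - 1) / 2 + of_int m * R1"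
    and "moment N chi 2 m = of_nat N ^ 2 * S * (of_int m - 1) * of_int m * (2 * of_int m - 1) / 6
                            + of_nat N * R1 * of_int m * (of_int m - 1) + of_int m * R2"
proof -
  have zero: "moment N chi p 0 = 0" for p by (simp add: moment_def window_def)
  have block1: "(\<Sum>k=1..int N. chi k * of_int (m * int N + k) ^ 1) = of_int m * of_nat N * S + R1" for m
    by (simp add: S_def R1_def algebra_simps sum.distrib sum_distrib_left)
  have block2: "(\<Sum>k=1..int N. chi k * of_int (m * int N + k) ^ 2)
                = (of_int m * of_nat N) ^ 2 * S + 2 * of_int m * of_nat N * R1 + R2" for m
    by (simp add: S_def R1_def R2_def power2_eq_square algebra_simps sum.distrib sum_distrib_left)
  show "moment N chi 1 m = of_nat N * S * of_int m * (of_int m - 1) / 2 + of_int m * R1"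
  proof (rule int_eq_by_differences)
    fix m :: int
    show "moment N chi 1 (m + 1) - moment N chi 1 m
      = (of_nat N * S * of_int (m + 1) * (of_int (m + 1) - 1) / 2 + of_int (m + 1) * R1)
        - (of_nat N * S * of_int m * (of_int m - 1) / 2 + of_int m * R1)"
      unfolding moment_step[OF per] block1 by (simp add: field_simps)
  qed (simp add: zero)
  show "moment N chi 2 m = of_nat N ^ 2 * S * (of_int m - 1) * of_int m * (2 * of_int m - 1) / 6
                            + of_nat N * R1 * of_int m * (of_int m - 1) + of_int m * R2"
  proof (rule int_eq_by_differences)
    fix m :: int
    show "moment N chi 2 (m + 1) - moment N chi 2 m
      = (of_nat N ^ 2 * S * (of_int (m + 1) - 1) * of_int (m + 1) * (2 * of_int (m + 1) - 1) / 6
          + of_nat N * R1 * of_int (m + 1) * (of_int (m + 1) - 1) + of_int (m + 1) * R2)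
        - (of_nat N ^ 2 * S * (of_int m - 1) * of_int m * (2 * of_int m - 1) / 6
          + of_nat N * R1 * of_int m * (of_int m - 1) + of_int m * R2)"
      unfolding moment_step[OF per] block2 by (simp add: field_simps power2_eq_square)
  qed (simp add: zero)
qed

text \<open>The scalar by which a_x a_y differs from its normal ordered form :a_x a_y:.\<close>
definition contraction :: "int \<Rightarrow> int \<Rightarrow> complex" where
  "contraction x y = (if x = - y \<and> 0 < x then of_int x else 0)"

text \<open>The scalar contribution of the j-th term of the commutator [L^chi1_m, L^chi2_n],
  written for chi = chi1 chi2; the central term is 1/(2N) times its sum over j.\<close>
definition anomaly_density :: "nat \<Rightarrow> (int \<Rightarrow> complex) \<Rightarrow> int \<Rightarrow> int \<Rightarrow> int \<Rightarrow> complex" where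
  "anomaly_density N chi m n j =
     chi j / of_nat N * (of_int j * contraction (m * int N - j) (j + n * int N)
                         - of_int (j + n * int N) * contraction (- j) (j + (m + n) * int N))"

lemma anomaly_density_off_diagonal:
  assumes "N > 0" and "m + n \<noteq> 0"
  shows "anomaly_density N chi m n j = 0"
proof -
  have "(m + n) * int N \<noteq> 0" using assms by simp
  then have "m * int N - j \<noteq> - (j + n * int N)" and "- j \<noteq> - (j + (m + n) * int N)"
    by (simp_all add: algebra_simps)
  then show ?thesis by (simp add: anomaly_density_def contraction_def)
qed

lemma anomaly_density_diagonal:
  "anomaly_density N chi m (- m) j = chi j * of_int (j * (m * int N - j)) * window N m j / of_nat N"
proof (cases "N = 0")
  case False
  then show ?thesis
    by (cases "j \<le> 0"; cases "j \<le> m * int N")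
       (auto simp: anomaly_density_def contraction_def window_def field_simps)
qed (simp add: anomaly_density_def)

lemma finite_support_anomaly_density:
  assumes "N > 0"
  shows "finite {j. anomaly_density N chi m n j \<noteq> 0}"
proof (cases "m + n = 0")
  case True
  then have n: "n = - m" by simp
  have "finite {j. chi j * of_int (j * (m * int N - j)) * window N m j \<noteq> 0}"
    by (rule finite_support_window)
  then show ?thesis by (rule finite_support_mono) (simp add: n anomaly_density_diagonal)
qed (simp add: anomaly_density_off_diagonal[OF assms])

lemma anomaly_sum_diagonal:
  "Sum_any (anomaly_density N chi m (- m))
   = (of_int m * of_nat N * moment N chi 1 m - moment N chi 2 m) / of_nat N"
proof -
  define f where "f p j = chi j * of_int j ^ p * window N m j" for p j
  have fin: "finite {j. f p j \<noteq> 0}" for p unfolding f_def by (rule finite_support_window)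
  have fin': "finite {j. of_int m * of_nat N * f 1 j \<noteq> 0}"
    by (rule finite_support_mono[OF fin[of 1]]) simp
  have "Sum_any (anomaly_density N chi m (- m))
        = Sum_any (\<lambda>j. (of_int m * of_nat N * f 1 j - f 2 j) * (1 / of_nat N))"
    by (rule Sum_any.cong) (simp add: anomaly_density_diagonal f_def power2_eq_square field_simps)
  also have "\<dots> = Sum_any (\<lambda>j. of_int m * of_nat N * f 1 j - f 2 j) * (1 / of_nat N)"
    by (rule Sum_any_left_distrib[symmetric], rule finite_support_diff[OF fin' fin])
  also have "\<dots> = (of_int m * of_nat N * Sum_any (f 1) - Sum_any (f 2)) / of_nat N"
    by (simp only: Sum_any_diff[OF fin' fin] Sum_any_right_distrib[OF fin, symmetric]) simp
  also have "\<dots> = (of_int m * of_nat N * moment N chi 1 m - moment N chi 2 m) / of_nat N"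
    by (simp only: moment_def f_def[abs_def])
  finally show ?thesis .
qed

lemma central_term:
  assumes N: "N > 0" and per: "\<forall>j. chi (j + int N) = chi j"
  shows "1 / (2 * of_nat N) * Sum_any (anomaly_density N chi m (- m))
         = of_int m / of_nat N * Lminus1 N chi + of_int (m ^ 3) / 12 * (\<Sum>k=1..int N. chi k)"
  unfolding anomaly_sum_diagonal moment_closed_forms[OF per] Lminus1_def
  using N by (simp add: field_simps power2_eq_square power3_eq_cube)

subsection \<open>Operators on the Fock space\<close>

locale fock_module =
  fixes scale :: "complex \<Rightarrow> 'v::ab_group_add \<Rightarrow> 'v" and a :: "int \<Rightarrow> 'v \<Rightarrow> 'v"
  assumes oscillator: "oscillator_rep scale a" and fock: "restricted a"
begin

sublocale module scale
  using oscillator by (simp add: oscillator_rep_def module_iff_vector_space)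

abbreviation L :: "nat \<Rightarrow> (int \<Rightarrow> complex) \<Rightarrow> int \<Rightarrow> 'v \<Rightarrow> 'v" where
  "L \<equiv> Lop scale a"

lemma commutator: "a m (a n v) - a n (a m v) = (if m = - n then scale (of_int m) v else 0)"
  using oscillator by (simp add: oscillator_rep_def)

lemma a_hom: "module_hom scale scale (a j)"
  using oscillator by (simp add: oscillator_rep_def linear_iff_module_hom)

lemma a_add: "a j (x + y) = a j x + a j y" using module_hom.add[OF a_hom] .
lemma a_scale: "a j (scale c x) = scale c (a j x)" using module_hom.scale[OF a_hom] .
lemma a_diff: "a j (x - y) = a j x - a j y" using module_hom.diff[OF a_hom] .
lemma a_minus: "a j (- x) = - a j x" using module_hom.neg[OF a_hom] .
lemma a_zero [simp]: "a j 0 = 0" using module_hom.zero[OF a_hom] .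

lemma a_additive: "additive (a j)"
  by standard (rule a_add)

lemma product_normal_ord: "a x (a y w) = normal_ord a x y w + scale (contraction x y) w"
proof (cases "x \<le> y")
  case True
  then show ?thesis by (auto simp: normal_ord_def contraction_def)
next
  case False
  then show ?thesis
    using commutator[of x y w] by (auto simp: normal_ord_def contraction_def algebra_simps)
qed

lemma normal_ord_add: "normal_ord a x y (u + w) = normal_ord a x y u + normal_ord a x y w"
  by (simp add: normal_ord_def a_add)

lemma normal_ord_scale: "normal_ord a x y (scale c w) = scale c (normal_ord a x y w)"
  by (simp add: normal_ord_def a_scale)

lemma finite_support_normal_ord: "finite {j. normal_ord a (c - j) (j + d) w \<noteq> 0}"
proof -
  obtain J where J: "\<forall>j\<ge>J. a j w = 0" using fock by (auto simp: restricted_def)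
  show ?thesis
  proof (rule finite_support_bounded[where B = "\<bar>J\<bar> + \<bar>c\<bar> + \<bar>d\<bar>"])
    fix j :: int assume "\<bar>J\<bar> + \<bar>c\<bar> + \<bar>d\<bar> < \<bar>j\<bar>"
    then consider "c - j \<le> j + d" "J \<le> j + d" | "\<not> c - j \<le> j + d" "J \<le> c - j" by linarith
    then show "normal_ord a (c - j) (j + d) w = 0"
      by cases (simp_all add: normal_ord_def J)
  qed
qed

lemma finite_support_L_terms:
  "finite {j. scale (chi j) (normal_ord a (- j) (j + d) w) \<noteq> 0}"
  by (rule finite_support_mono[OF finite_support_normal_ord[of 0 d w]]) simp

lemma L_add: "L N chi n (x + y) = L N chi n x + L N chi n y"
proof -
  let ?t = "\<lambda>u j. scale (chi j) (normal_ord a (- j) (j + n * int N) u)"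
  have "Sum_any (\<lambda>j. ?t (x + y) j) = Sum_any (\<lambda>j. ?t x j + ?t y j)"
    by (simp add: normal_ord_add scale_right_distrib)
  also have "\<dots> = Sum_any (?t x) + Sum_any (?t y)"
    by (rule Sum_any.distrib[OF finite_support_L_terms finite_support_L_terms])
  finally show ?thesis by (simp add: Lop_def scale_right_distrib)
qed

lemma L_scale: "L N chi n (scale c x) = scale c (L N chi n x)"
proof -
  let ?t = "\<lambda>u j. scale (chi j) (normal_ord a (- j) (j + n * int N) u)"
  have "additive (scale c)" by standard (rule scale_right_distrib)
  then have "Sum_any (\<lambda>j. scale c (?t x j)) = scale c (Sum_any (?t x))"
    by (rule Sum_any_additive[symmetric, OF _ finite_support_L_terms])
  then show ?thesis by (simp add: Lop_def normal_ord_scale mult.commute)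
qed

lemma L_additive: "additive (L N chi n)"
  by standard (rule L_add)

text \<open>Commutator of a normal ordered quadratic with a single mode: the scalar
  contraction term commutes, so only the product a_x a_y contributes.\<close>
lemma commutator_normal_ord_a:
  "normal_ord a x y (a k w) - a k (normal_ord a x y w)
   = (if y = - k then scale (of_int y) (a x w) else 0) + (if x = - k then scale (of_int x) (a y w) else 0)"
proof -
  have "normal_ord a x y (a k w) - a k (normal_ord a x y w) = a x (a y (a k w)) - a k (a x (a y w))"
    by (simp add: product_normal_ord[of x y] a_add a_scale algebra_simps)
  also have "\<dots> = a x (a y (a k w) - a k (a y w)) + (a x (a k (a y w)) - a k (a x (a y w)))"
    by (simp add: a_diff)
  finally show ?thesis by (simp add: commutator a_scale a_minus)
qed

lemma commutator_L_a:
  assumes per: "\<forall>j. chi (j + int N) = chi j" and ev: "\<forall>j. chi j = chi (- j)"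
  shows "L N chi m (a k w) - a k (L N chi m w)
         = scale (- of_int k / of_nat N * chi k) (a (k + m * int N) w)"
proof -
  define P where "P = m * int N"
  define t where "t u j = scale (chi j) (normal_ord a (- j) (j + P) u)" for u j
  define X where "X = scale (chi k * of_int (- k)) (a (k + P) w)"
  have fin: "finite {j. t u j \<noteq> 0}" for u unfolding t_def by (rule finite_support_L_terms)
  have fin': "finite {j. a k (t w j) \<noteq> 0}" by (rule finite_support_mono[OF fin[of w]]) simp
  have chi_k: "chi (- k - P) = chi k"
    using ev[rule_format, of "- k - P"] periodic_multiple[OF per, of k m]
    by (simp add: P_def add.commute)
  have pointwise: "t (a k w) j - a k (t w j) = (if j = - k - P then X else 0) + (if j = k then X else 0)" for j
  proof -
    have "t (a k w) j - a k (t w j)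
          = scale (chi j) (normal_ord a (- j) (j + P) (a k w) - a k (normal_ord a (- j) (j + P) w))"
      by (simp add: t_def a_scale scale_right_diff_distrib)
    also have "\<dots> = (if j = - k - P then X else 0) + (if j = k then X else 0)"
      unfolding commutator_normal_ord_a
      using chi_k by (auto simp: X_def scale_right_distrib mult.commute add.commute)
    finally show ?thesis .
  qed
  have "Sum_any (t (a k w)) - a k (Sum_any (t w)) = Sum_any (\<lambda>j. t (a k w) j - a k (t w j))"
    by (simp only: Sum_any_additive[OF a_additive fin] Sum_any_diff[OF fin fin'])
  also have "\<dots> = X + X"
    unfolding pointwise by (subst Sum_any.distrib) (auto intro: finite_subset[of _ "{_}"])
  finally have "L N chi m (a k w) - a k (L N chi m w) = scale (1 / (2 * of_nat N)) (X + X)"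
    by (simp add: Lop_def t_def P_def a_scale flip: scale_right_diff_distrib)
  also have "X + X = scale (2 * (chi k * of_int (- k))) (a (k + P) w)"
    unfolding X_def mult_2 by (rule scale_left_distrib[symmetric])
  also have "scale (1 / (2 * of_nat N)) \<dots> = scale (- of_int k / of_nat N * chi k) (a (k + m * int N) w)"
    by (simp add: scale_scale P_def mult.commute)
  finally show ?thesis .
qed

lemma scale_combine:
  "scale s (scale c1 (x + scale k1 v) - scale c2 (y + scale k2 v))
   = scale (s * c1) x - scale (s * c2) y + scale (s * c1 * k1 - s * c2 * k2) v"
  by (simp add: scale_right_distrib scale_right_diff_distrib scale_left_diff_distrib scale_scale mult.assoc)

lemma commutator_L_product:
  assumes per: "\<forall>j. chi (j + int N) = chi j" and ev: "\<forall>j. chi j = chi (- j)"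
  shows "L N chi m (a x (a y w)) - a x (a y (L N chi m w))
         = scale (- of_int x / of_nat N * chi x) (a (x + m * int N) (a y w))
           + scale (- of_int y / of_nat N * chi y) (a x (a (y + m * int N) w))"
proof -
  have "L N chi m (a x (a y w)) - a x (a y (L N chi m w))
        = (L N chi m (a x (a y w)) - a x (L N chi m (a y w))) + a x (L N chi m (a y w) - a y (L N chi m w))"
    by (simp add: a_diff)
  then show ?thesis by (simp only: commutator_L_a[OF per ev] a_scale)
qed

lemma commutator_L_normal_ord:
  assumes per: "\<forall>j. chi (j + int N) = chi j" and ev: "\<forall>j. chi j = chi (- j)"
  shows "L N chi m (normal_ord a (- j) (j + n * int N) v) - normal_ord a (- j) (j + n * int N) (L N chi m v)
         = scale (of_int j / of_nat N * chi j) (a (m * int N - j) (a (j + n * int N) v))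
           - scale (of_int (j + n * int N) / of_nat N * chi j)
               (a (- j) (a (j + (m * int N + n * int N)) v))"
proof -
  define P where "P = m * int N"
  define Q where "Q = n * int N"
  have c1: "- of_int (- j) / of_nat N * chi (- j) = of_int j / of_nat N * chi j"
    using ev by simp
  have "chi (j + Q) = chi j" using periodic_multiple[OF per] by (simp add: Q_def)
  then have c2: "- of_int (j + Q) / of_nat N * chi (j + Q) = - (of_int (j + Q) / of_nat N * chi j)"
    by (metis minus_divide_left mult_minus_left)
  have idx: "- j + P = P - j" "j + Q + P = j + (P + Q)" by simp_all
  have "L N chi m (normal_ord a (- j) (j + Q) v) - normal_ord a (- j) (j + Q) (L N chi m v)
        = L N chi m (a (- j) (a (j + Q) v)) - a (- j) (a (j + Q) (L N chi m v))"
    by (simp add: product_normal_ord[of "- j" "j + Q"] L_add L_scale)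
  also have "\<dots> = scale (of_int j / of_nat N * chi j) (a (P - j) (a (j + Q) v))
                    - scale (of_int (j + Q) / of_nat N * chi j) (a (- j) (a (j + (P + Q)) v))"
    unfolding commutator_L_product[OF per ev] P_def[symmetric] c1 c2 idx scale_minus_left
    by simp
  finally show ?thesis by (simp only: P_def Q_def)
qed

lemma commutator_L_quadratic:
  fixes m n :: int and v :: 'v
  assumes per1: "\<forall>j. chi1 (j + int N) = chi1 j" and ev1: "\<forall>j. chi1 j = chi1 (- j)"
    and per2: "\<forall>j. chi2 (j + int N) = chi2 j"
  defines "chi \<equiv> \<lambda>j. chi1 j * chi2 j"
  defines "q \<equiv> \<lambda>i. scale (chi i) (normal_ord a (- i) (i + (m + n) * int N) v)"
  shows "L N chi1 m (scale (chi2 j) (normal_ord a (- j) (j + n * int N) v))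
           - scale (chi2 j) (normal_ord a (- j) (j + n * int N) (L N chi1 m v))
         = scale (of_int j / of_nat N) (q (j - m * int N)) - scale (of_int (j + n * int N) / of_nat N) (q j)
           + scale (anomaly_density N chi m n j) v"
proof -
  define P where "P = m * int N"
  define Q where "Q = n * int N"
  have chi_P: "chi (j - P) = chi j"
    using periodic_multiple[OF per1, of "j - P" m] periodic_multiple[OF per2, of "j - P" m]
    by (simp add: chi_def P_def)
  have q_shift: "q (j - P) = scale (chi j) (normal_ord a (P - j) (j + Q) v)"
    unfolding q_def chi_P by (simp add: P_def Q_def algebra_simps)
  have "L N chi1 m (scale (chi2 j) (normal_ord a (- j) (j + Q) v))
          - scale (chi2 j) (normal_ord a (- j) (j + Q) (L N chi1 m v))
        = scale (chi2 j) (L N chi1 m (normal_ord a (- j) (j + Q) v) - normal_ord a (- j) (j + Q) (L N chi1 m v))"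
    by (simp only: L_scale normal_ord_scale scale_right_diff_distrib)
  also have "\<dots> = scale (of_int j / of_nat N * chi j) (normal_ord a (P - j) (j + Q) v)
                    - scale (of_int (j + Q) / of_nat N * chi j) (normal_ord a (- j) (j + (P + Q)) v)
                    + scale (anomaly_density N chi m n j) v"
  proof -
    have "chi2 j * (of_int j / of_nat N * chi1 j) = of_int j / of_nat N * chi j"
      and "chi2 j * (of_int (j + Q) / of_nat N * chi1 j) = of_int (j + Q) / of_nat N * chi j"
      by (simp_all add: chi_def)
    moreover have "chi2 j * (of_int j / of_nat N * chi1 j) * contraction (P - j) (j + Q)
          - chi2 j * (of_int (j + Q) / of_nat N * chi1 j) * contraction (- j) (j + (P + Q))
          = anomaly_density N chi m n j"
      by (simp add: anomaly_density_def chi_def P_def Q_def algebra_simps diff_divide_distrib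
                    add_divide_distrib)
    ultimately show ?thesis
      unfolding Q_def P_def commutator_L_normal_ord[OF per1 ev1] product_normal_ord scale_combine
      by (simp only:)
  qed
  also have "\<dots> = scale (of_int j / of_nat N) (q (j - P)) - scale (of_int (j + Q) / of_nat N) (q j)
                    + scale (anomaly_density N chi m n j) v"
    unfolding q_shift by (simp add: q_def scale_scale P_def Q_def distrib_right)
  finally show ?thesis by (simp only: P_def Q_def)
qed

lemma commutator_with_L:
  assumes F_add: "additive F" and F_scale: "\<And>c x. F (scale c x) = scale c (F x)"
  shows "F (L N chi n v) - L N chi n (F v)
         = scale (1 / (2 * of_nat N))
             (Sum_any (\<lambda>j. F (scale (chi j) (normal_ord a (- j) (j + n * int N) v))
                            - scale (chi j) (normal_ord a (- j) (j + n * int N) (F v))))"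
proof -
  define t where "t u j = scale (chi j) (normal_ord a (- j) (j + n * int N) u)" for u j
  have fin_t: "finite {j. t u j \<noteq> 0}" for u unfolding t_def by (rule finite_support_L_terms)
  have fin_Ft: "finite {j. F (t v j) \<noteq> 0}"
    by (rule finite_support_mono[OF fin_t[of v]]) (simp add: additive.zero[OF F_add])
  have "F (L N chi n v) - L N chi n (F v)
        = scale (1 / (2 * of_nat N)) (F (Sum_any (t v)) - Sum_any (t (F v)))"
    by (simp add: Lop_def t_def F_scale scale_right_diff_distrib)
  also have "\<dots> = scale (1 / (2 * of_nat N)) (Sum_any (\<lambda>j. F (t v j) - t (F v) j))"
    by (simp only: Sum_any_additive[OF F_add fin_t] Sum_any_diff[OF fin_Ft fin_t])
  finally show ?thesis by (simp only: t_def)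
qed

text \<open>Summing the non-central part of the commutator: after the index shift
  j \<mapsto> j + mN the two weights differ by exactly (m - n)N.\<close>
lemma Sum_any_weight_shift:
  fixes m n :: int
  assumes N: "N > 0" and fin_q: "finite {j. q j \<noteq> 0}"
  shows "Sum_any (\<lambda>j. scale (of_int j / of_nat N) (q (j - m * int N))
                        - scale (of_int (j + n * int N) / of_nat N) (q j))
         = scale (of_int (m - n)) (Sum_any q)"
proof -
  define f where "f i = scale (of_int (i + m * int N) / of_nat N) (q i)" for i
  define g where "g i = scale (of_int (i + n * int N) / of_nat N) (q i)" for i
  have fin_f: "finite {j. f j \<noteq> 0}" and fin_g: "finite {j. g j \<noteq> 0}"
    unfolding f_def g_def by (rule finite_support_mono[OF fin_q], simp)+
  have fin_f': "finite {j. f (j - m * int N) \<noteq> 0}"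
    using finite_support_shift[OF fin_f, of "- (m * int N)"] by simp
  have f_minus_g: "f j - g j = scale (of_int (m - n)) (q j)" for j
  proof -
    have "of_int (j + m * int N) / of_nat N - of_int (j + n * int N) / of_nat N
          = (of_int (m - n) :: complex)"
      using N by (simp add: field_simps)
    then show ?thesis by (simp add: f_def g_def flip: scale_left_diff_distrib)
  qed
  have "additive (scale (of_int (m - n)))" by standard (rule scale_right_distrib)
  then have "scale (of_int (m - n)) (Sum_any q) = Sum_any f - Sum_any g"
    by (simp add: Sum_any_additive[OF _ fin_q] f_minus_g Sum_any_diff[OF fin_f fin_g, symmetric])
  also have "\<dots> = Sum_any (\<lambda>j. f (j - m * int N)) - Sum_any g"
    using Sum_any_shift[of f "- (m * int N)"] by simp
  also have "\<dots> = Sum_any (\<lambda>j. f (j - m * int N) - g j)"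
    by (rule Sum_any_diff[OF fin_f' fin_g, symmetric])
  finally show ?thesis by (simp add: f_def g_def)
qed

lemma commutator_L_L:
  fixes m n :: int and v :: 'v
  assumes N: "N > 0"
    and per1: "\<forall>j. chi1 (j + int N) = chi1 j" and ev1: "\<forall>j. chi1 j = chi1 (- j)"
    and per2: "\<forall>j. chi2 (j + int N) = chi2 j"
  defines "chi \<equiv> \<lambda>j. chi1 j * chi2 j"
  shows "L N chi1 m (L N chi2 n v) - L N chi2 n (L N chi1 m v)
         = scale (of_int (m - n)) (L N chi (m + n) v)
           + scale (1 / (2 * of_nat N) * Sum_any (anomaly_density N chi m n)) v"
proof -
  define q where "q i = scale (chi i) (normal_ord a (- i) (i + (m + n) * int N) v)" for i
  define R where "R j = scale (of_int j / of_nat N) (q (j - m * int N))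
                          - scale (of_int (j + n * int N) / of_nat N) (q j)" for j
  define \<sigma> where "\<sigma> = anomaly_density N chi m n"
  have fin_q: "finite {j. q j \<noteq> 0}" unfolding q_def by (rule finite_support_L_terms)
  have fin_q': "finite {j. q (j - m * int N) \<noteq> 0}"
    using finite_support_shift[OF fin_q, of "- (m * int N)"] by simp
  have fin_R: "finite {j. R j \<noteq> 0}"
    unfolding R_def
    by (rule finite_support_diff[OF finite_support_mono[OF fin_q'] finite_support_mono[OF fin_q]]) simp_all
  have fin_\<sigma>: "finite {j. \<sigma> j \<noteq> 0}"
    unfolding \<sigma>_def by (rule finite_support_anomaly_density[OF N])
  have fin_\<sigma>v: "finite {j. scale (\<sigma> j) v \<noteq> 0}"
    by (rule finite_support_mono[OF fin_\<sigma>]) simp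
  have "additive (\<lambda>z. scale z v)" by standard (rule scale_left_distrib)
  then have central: "Sum_any (\<lambda>j. scale (\<sigma> j) v) = scale (Sum_any \<sigma>) v"
    by (rule Sum_any_additive[OF _ fin_\<sigma>, symmetric])
  have "L N chi1 m (L N chi2 n v) - L N chi2 n (L N chi1 m v)
        = scale (1 / (2 * of_nat N)) (Sum_any (\<lambda>j. R j + scale (\<sigma> j) v))"
    unfolding commutator_with_L[OF L_additive L_scale] R_def q_def \<sigma>_def chi_def
    by (simp add: commutator_L_quadratic[OF per1 ev1 per2])
  also have "Sum_any (\<lambda>j. R j + scale (\<sigma> j) v) = scale (of_int (m - n)) (Sum_any q) + scale (Sum_any \<sigma>) v"
    using Sum_any.distrib[OF fin_R fin_\<sigma>v] Sum_any_weight_shift[OF N fin_q]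
    by (simp add: central R_def)
  also have "Sum_any q = scale (2 * of_nat N) (L N chi (m + n) v)"
    using N by (simp add: Lop_def q_def scale_scale)
  finally show ?thesis
    using N by (simp add: \<sigma>_def scale_right_distrib scale_scale mult.commute)
qed

end

theorem theorem2p4:
  fixes N :: nat and G :: "(int \<Rightarrow> complex) set" and e :: "int \<Rightarrow> complex"
    and scale :: "complex \<Rightarrow> 'v::ab_group_add \<Rightarrow> 'v" and a :: "int \<Rightarrow> 'v \<Rightarrow> 'v"
  assumes Nodd: "odd N"
    and grp: "comm_group (fun_group G e)"
    and fin: "finite G"
    and periodic: "\<forall>chi\<in>G. \<forall>j. chi (j + int N) = chi j"
    and even: "\<forall>chi\<in>G. \<forall>j. chi j = chi (- j)"
    and sum0: "\<forall>chi\<in>G. chi \<noteq> e \<longrightarrow> (\<Sum>k=1..int N. chi k) = 0"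
    and rep: "oscillator_rep scale a"
    and fock: "restricted a"
    and chi1: "chi1 \<in> G" and chi2: "chi2 \<in> G"
  shows "Lop scale a N chi1 m (Lop scale a N chi2 n v) - Lop scale a N chi2 n (Lop scale a N chi1 m v)
         = scale (of_int (m - n)) (Lop scale a N (\<lambda>x. chi1 x * chi2 x) (m + n) v)
           + (if m = - n
              then scale (of_int m / of_nat N * Lminus1 N (\<lambda>x. chi1 x * chi2 x)
                          + of_int (m ^ 3) / 12 * (\<Sum>k=1..int N. chi1 k * chi2 k)) v
              else 0)"
proof -
  interpret fock_module scale a by (rule fock_module.intro[OF rep fock])
  have N: "N > 0" using Nodd by (cases N) auto
  have per1: "\<forall>j. chi1 (j + int N) = chi1 j" and per2: "\<forall>j. chi2 (j + int N) = chi2 j"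
    and ev1: "\<forall>j. chi1 j = chi1 (- j)"
    using periodic even chi1 chi2 by auto
  have per: "\<forall>j. chi1 (j + int N) * chi2 (j + int N) = chi1 j * chi2 j"
    using per1 per2 by simp
  note commutation = commutator_L_L[OF N per1 ev1 per2, of m n v]
  show ?thesis
  proof (cases "m = - n")
    case True
    then have "n = - m" by simp
    then show ?thesis using commutation central_term[OF N per, of m] True by simp
  next
    case False
    then have "anomaly_density N (\<lambda>x. chi1 x * chi2 x) m n = (\<lambda>j. 0)"
      using anomaly_density_off_diagonal[OF N] by fastforce
    then show ?thesis using commutation False by simp
  qed
qed

end
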